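(* Let $X$ be a real Hilbert space and $h:\Phi_{lsc}^{\mathbb{R}}\to(-\infty,+\infty]$ a proper lower semicontinuous function bounded from below. Let $\gamma>0$ and let $(\phi_n)=((a_n,u_n))$ be generated by the $\Phi_{lsc}^{\mathbb{R}}$-proximal algorithm on $\Phi_{lsc}^{\mathbb{R}}$ described in the context. Then for every $n$ and every $\phi=(a,u)\in\Phi_{lsc}^{\mathbb{R}}$, $$h(\phi)-h(\phi_{n+1})\ge\frac{1}{2\gamma}\big[\|u-u_{n+1}\|^2-\|u-u_n\|^2\big]+\Big(1-\frac{2(a-a_{n+1})}{\gamma}\Big)\frac{\|u_n-u_{n+1}\|^2}{2\gamma}.$$ Moreover, if $\gamma\ge a_n-a_{n+1}$ for all $n\in\mathbb{N}$, then $(h(\phi_n))_{n\in\mathbb{N}}$ is non-increasing.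
   Context: $\Phi_{lsc}^{\mathbb{R}}=\{\phi=(a,u)\in\mathbb{R}\times X\}$ with $\phi(x)=-a\|x\|^2+\langle u,x\rangle$, identified with the Hilbert space $\mathbb{R}\times X$ (inner product $ab+\langle u,v\rangle$). The $X$-subdifferential of $h$ at $\psi$ is $\partial_Xh(\psi)=\{w\in X: h(\phi)-h(\psi)\ge\phi(w)-\psi(w)\ \forall\phi\in\Phi_{lsc}^{\mathbb{R}}\}$. Algorithm: choose $\gamma>0$, $\phi_0=(a_0,u_0)$. For $n\in\mathbb{N}$: find $\phi_{n+1}=(a_{n+1},u_{n+1})$ with $\frac{u_n-u_{n+1}}{\gamma}\in\partial_Xh(\phi_{n+1})$; if no such $\phi_{n+1}$ exists, return $\phi_n$. *)

theory Defs
  imports "HOL-Analysis.Analysis"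
begin

text \<open>An element phi = (a,u) of Phi_lsc^R acts on X as phi(x) = -a*norm x^2 + inner u x.\<close>
definition phi_eval :: "real \<times> 'x::real_inner \<Rightarrow> 'x \<Rightarrow> real" where
  "phi_eval p x = - fst p * (norm x)\<^sup>2 + inner (snd p) x"

definition lsc_fun :: "('a::topological_space \<Rightarrow> ereal) \<Rightarrow> bool" where
  "lsc_fun h \<longleftrightarrow> (\<forall>c. closed {p. h p \<le> c})"

definition X_subdiff :: "(real \<times> 'x::real_inner \<Rightarrow> ereal) \<Rightarrow> real \<times> 'x \<Rightarrow> 'x set" where
  "X_subdiff h psi = {w. h psi < \<infinity> \<and>
     (\<forall>p. h p \<ge> h psi + ereal (phi_eval p w - phi_eval psi w))}"

end

theory Submission
  imports Defs
begin

text \<open>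
  The optimality condition of a step says that \<open>w = (u\<^sub>n - u\<^sub>n\<^sub>+\<^sub>1) /\<^sub>R \<gamma>\<close> is an
  \<open>X\<close>-subgradient of \<open>h\<close> at \<open>\<phi>\<^sub>n\<^sub>+\<^sub>1\<close>, so \<open>h \<phi> - h \<phi>\<^sub>n\<^sub>+\<^sub>1 \<ge> \<phi> w - \<phi>\<^sub>n\<^sub>+\<^sub>1 w\<close>.
  Expanding \<open>\<phi> w - \<phi>\<^sub>n\<^sub>+\<^sub>1 w = -(a - a\<^sub>n\<^sub>+\<^sub>1) \<parallel>w\<parallel>\<^sup>2 + \<langle>u - u\<^sub>n\<^sub>+\<^sub>1, w\<rangle>\<close> with the
  polarization identity for \<open>\<langle>u - u\<^sub>n\<^sub>+\<^sub>1, u\<^sub>n - u\<^sub>n\<^sub>+\<^sub>1\<rangle>\<close> gives exactly the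
  stated right-hand side. Taking \<open>\<phi> = \<phi>\<^sub>n\<close>, that right-hand side becomes
  \<open>(1 - (a\<^sub>n - a\<^sub>n\<^sub>+\<^sub>1) / \<gamma>) \<parallel>u\<^sub>n - u\<^sub>n\<^sub>+\<^sub>1\<parallel>\<^sup>2 / \<gamma>\<close>, which is nonnegative when
  \<open>a\<^sub>n - a\<^sub>n\<^sub>+\<^sub>1 \<le> \<gamma>\<close>.
\<close>

lemma phi_eval_diff_scaled_step:
  fixes a a1 \<gamma> :: real and u u0 u1 :: "'x::real_inner"
  assumes "\<gamma> \<noteq> 0"
  shows "phi_eval (a, u) ((u0 - u1) /\<^sub>R \<gamma>) - phi_eval (a1, u1) ((u0 - u1) /\<^sub>R \<gamma>)
       = (1 / (2 * \<gamma>)) * ((norm (u - u1))\<^sup>2 - (norm (u - u0))\<^sup>2)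
         + (1 - 2 * (a - a1) / \<gamma>) * ((norm (u0 - u1))\<^sup>2 / (2 * \<gamma>))"
proof -
  define d where "d = u0 - u1"
  define N where "N = (norm d)\<^sup>2"
  define I where "I = inner (u - u1) d"
  have polarization: "(norm (u - u1))\<^sup>2 - (norm (u - u0))\<^sup>2 = 2 * I - N"
  proof -
    have "u - u0 = (u - u1) - d" unfolding d_def by simp
    then show ?thesis unfolding I_def N_def \<open>u - u0 = (u - u1) - d\<close>
      by (simp add: power2_norm_eq_inner inner_diff_left inner_diff_right inner_commute)
  qed
  have "phi_eval (a, u) (d /\<^sub>R \<gamma>) - phi_eval (a1, u1) (d /\<^sub>R \<gamma>)
      = - (a - a1) * (norm (d /\<^sub>R \<gamma>))\<^sup>2 + inner (u - u1) (d /\<^sub>R \<gamma>)"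
    unfolding phi_eval_def by (simp add: algebra_simps inner_diff_left)
  also have "\<dots> = - (a - a1) * (N / \<gamma>\<^sup>2) + I / \<gamma>"
    unfolding N_def I_def by (simp add: power_mult_distrib power_inverse divide_inverse mult.commute)
  also have "\<dots> = (1 / (2 * \<gamma>)) * (2 * I - N) + (1 - 2 * (a - a1) / \<gamma>) * (N / (2 * \<gamma>))"
    using assms by (simp add: field_simps power2_eq_square)
  finally show ?thesis unfolding polarization N_def d_def .
qed

lemma X_subdiff_finite:
  assumes "\<forall>p. h p \<noteq> -\<infinity>" and "w \<in> X_subdiff h \<psi>"
  shows "\<bar>h \<psi>\<bar> \<noteq> \<infinity>"
proof -
  have "h \<psi> < \<infinity>" using assms(2) unfolding X_subdiff_def by blast
  moreover have "h \<psi> \<noteq> -\<infinity>" using assms(1) by blast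
  ultimately show ?thesis by auto
qed

lemma X_subdiff_diff_ge:
  assumes "\<forall>p. h p \<noteq> -\<infinity>" and "w \<in> X_subdiff h \<psi>"
  shows "h p - h \<psi> \<ge> ereal (phi_eval p w - phi_eval \<psi> w)"
proof -
  have "h p \<ge> h \<psi> + ereal (phi_eval p w - phi_eval \<psi> w)"
    using assms(2) unfolding X_subdiff_def by blast
  then show ?thesis
    using X_subdiff_finite[OF assms] by (simp add: ereal_le_minus add.commute)
qed

lemma proximal_step_inequality:
  fixes h :: "real \<times> 'x::real_inner \<Rightarrow> ereal"
  assumes "\<forall>p. h p \<noteq> -\<infinity>" and "\<gamma> \<noteq> 0"
    and "(u0 - snd \<psi>) /\<^sub>R \<gamma> \<in> X_subdiff h \<psi>"
  shows "h (a, u) - h \<psi> \<ge>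
           ereal ((1 / (2 * \<gamma>)) * ((norm (u - snd \<psi>))\<^sup>2 - (norm (u - u0))\<^sup>2)
             + (1 - 2 * (a - fst \<psi>) / \<gamma>) * ((norm (u0 - snd \<psi>))\<^sup>2 / (2 * \<gamma>)))"
  using X_subdiff_diff_ge[OF assms(1,3), of "(a, u)"]
    phi_eval_diff_scaled_step[OF assms(2), of a u u0 "snd \<psi>" "fst \<psi>"]
  by simp

lemma proximal_step_descent:
  fixes h :: "real \<times> 'x::real_inner \<Rightarrow> ereal"
  assumes "\<forall>p. h p \<noteq> -\<infinity>" and "\<gamma> > 0"
    and step: "(snd \<phi> - snd \<psi>) /\<^sub>R \<gamma> \<in> X_subdiff h \<psi>"
    and "fst \<phi> - fst \<psi> \<le> \<gamma>"
  shows "h \<psi> \<le> h \<phi>"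
proof -
  define N where "N = (norm (snd \<phi> - snd \<psi>))\<^sup>2"
  have "0 \<le> (1 - (fst \<phi> - fst \<psi>) / \<gamma>) * (N / \<gamma>)"
    using assms(2,4) unfolding N_def by simp
  also have "\<dots> = (1 / (2 * \<gamma>)) * N + (1 - 2 * (fst \<phi> - fst \<psi>) / \<gamma>) * (N / (2 * \<gamma>))"
    using \<open>\<gamma> > 0\<close> by (simp add: field_simps)
  finally have "ereal 0 \<le> ereal ((1 / (2 * \<gamma>)) * N + (1 - 2 * (fst \<phi> - fst \<psi>) / \<gamma>) * (N / (2 * \<gamma>)))"
    by simp
  also have "\<dots> \<le> h \<phi> - h \<psi>"
    using proximal_step_inequality[OF assms(1) _ step, where a="fst \<phi>" and u="snd \<phi>"] \<open>\<gamma> > 0\<close>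
    unfolding N_def by simp
  finally have "0 \<le> h \<phi> - h \<psi>"
    by (simp add: zero_ereal_def)
  then show ?thesis
    using X_subdiff_finite[OF assms(1) step] by (simp add: ereal_le_minus)
qed

theorem proposition5:
  fixes h :: "real \<times> 'x::{real_inner, complete_space} \<Rightarrow> ereal"
    and \<gamma> :: real
    and \<phi>s :: "nat \<Rightarrow> real \<times> 'x"
  assumes not_minf: "\<forall>p. h p \<noteq> -\<infinity>"
    and proper: "\<exists>p. h p < \<infinity>"
    and lsc: "lsc_fun h"
    and bdd_below: "\<exists>m::real. \<forall>p. ereal m \<le> h p"
    and gamma_pos: "\<gamma> > 0"
    and step: "\<forall>n. (snd (\<phi>s n) - snd (\<phi>s (Suc n))) /\<^sub>R \<gamma> \<in> X_subdiff h (\<phi>s (Suc n))"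
  shows "(\<forall>n a u. h (a, u) - h (\<phi>s (Suc n)) \<ge>
            ereal ((1 / (2 * \<gamma>)) * ((norm (u - snd (\<phi>s (Suc n))))\<^sup>2 - (norm (u - snd (\<phi>s n)))\<^sup>2)
              + (1 - 2 * (a - fst (\<phi>s (Suc n))) / \<gamma>) * ((norm (snd (\<phi>s n) - snd (\<phi>s (Suc n))))\<^sup>2 / (2 * \<gamma>))))
       \<and> ((\<forall>n. \<gamma> \<ge> fst (\<phi>s n) - fst (\<phi>s (Suc n))) \<longrightarrow> decseq (\<lambda>n. h (\<phi>s n)))"
proof (intro conjI allI impI)
  fix n a u
  show "h (a, u) - h (\<phi>s (Suc n)) \<ge>
          ereal ((1 / (2 * \<gamma>)) * ((norm (u - snd (\<phi>s (Suc n))))\<^sup>2 - (norm (u - snd (\<phi>s n)))\<^sup>2)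
            + (1 - 2 * (a - fst (\<phi>s (Suc n))) / \<gamma>) * ((norm (snd (\<phi>s n) - snd (\<phi>s (Suc n))))\<^sup>2 / (2 * \<gamma>)))"
    using proximal_step_inequality[OF not_minf _ step[rule_format, of n]] gamma_pos by simp
next
  assume "\<forall>n. \<gamma> \<ge> fst (\<phi>s n) - fst (\<phi>s (Suc n))"
  then show "decseq (\<lambda>n. h (\<phi>s n))"
    using proximal_step_descent[OF not_minf gamma_pos step[rule_format]] by (simp add: decseq_SucI)
qed

end
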